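(* Let $Y$ be a real Banach space and $\varepsilon>0$. Define $f:B_Y\times B_Y\times B_{Y^*}\to\mathbb{R}$ by $$f(x,y,x^* )=\sup_{t\ge\varepsilon}\Big(1-\frac{\|x+ty\|}{|x^*(x)|+t}\Big).$$ If $\delta>0$, $x,\tilde x,y,\tilde y\in B_Y$ with $\|x-\tilde x\|\le\delta$, $\|y-\tilde y\|\le\delta$, and $x^*,\tilde x^*\in B_{Y^*}$ with $\|x^*-\tilde x^*\|\le\delta$, then $$|f(x,y,x^* )-f(\tilde x,\tilde y,\tilde x^* )|\le\delta\,(3/\varepsilon+2/\varepsilon^2+1).$$
   Context: $B_Y$ and $B_{Y^*}$ denote the closed unit balls of $Y$ and of its dual $Y^*$. *)

theory Defs
  imports "HOL-Analysis.Analysis"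
begin

definition fdef :: "real \<Rightarrow> 'a::real_normed_vector \<Rightarrow> 'a \<Rightarrow> ('a \<Rightarrow>\<^sub>L real) \<Rightarrow> real" where
  "fdef eps x y xs = (SUP t\<in>{eps..}. 1 - norm (x + t *\<^sub>R y) / (\<bar>blinfun_apply xs x\<bar> + t))"

end

theory Submission
  imports Defs
begin

text \<open>A pointwise bound on the difference of the terms carries over to the suprema, so fix
  t \<ge> eps and compare the quotients N/(a + t), where N = \<parallel>x + t y\<parallel> and a = |x*(x)|. The
  numerators differ by at most \<delta>(1 + t) and the denominators by at most 2\<delta>; splitting the
  difference of the quotients accordingly gives \<delta>(1 + 3/t + 2/t^2), largest at t = eps.\<close>

lemma cSUP_abs_diff_le:
  fixes g h :: "'a \<Rightarrow> real"
  assumes "S \<noteq> {}" "bdd_above (g ` S)" "bdd_above (h ` S)"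
    and "\<And>t. t \<in> S \<Longrightarrow> \<bar>g t - h t\<bar> \<le> C"
  shows "\<bar>(SUP t\<in>S. g t) - (SUP t\<in>S. h t)\<bar> \<le> C"
proof -
  have "(SUP t\<in>S. g t) \<le> (SUP t\<in>S. h t) + C"
  proof (rule cSUP_least[OF assms(1)])
    fix t assume "t \<in> S"
    then show "g t \<le> (SUP t\<in>S. h t) + C"
      using assms(4)[of t] cSUP_upper[OF _ assms(3)] by fastforce
  qed
  moreover have "(SUP t\<in>S. h t) \<le> (SUP t\<in>S. g t) + C"
  proof (rule cSUP_least[OF assms(1)])
    fix t assume "t \<in> S"
    then show "h t \<le> (SUP t\<in>S. g t) + C"
      using assms(4)[of t] cSUP_upper[OF _ assms(2)] by fastforce
  qed
  ultimately show ?thesis by linarith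
qed

lemma abs_diff_divide_add_le:
  fixes a a' N N' t e e' M :: real
  assumes "t > 0" "a \<ge> 0" "a' \<ge> 0" "0 \<le> N'" "N' \<le> M"
    and "\<bar>N - N'\<bar> \<le> e" "\<bar>a - a'\<bar> \<le> e'"
  shows "\<bar>N / (a + t) - N' / (a' + t)\<bar> \<le> e / t + M * e' / t\<^sup>2"
proof -
  have pos: "a + t > 0" "a' + t > 0" using assms by auto
  have split: "N / (a + t) - N' / (a' + t) = (N - N') / (a + t) + N' * (a' - a) / ((a + t) * (a' + t))"
    using pos by (simp add: divide_simps) (simp add: algebra_simps)
  have numerator: "\<bar>(N - N') / (a + t)\<bar> \<le> e / t"
  proof -
    have "\<bar>(N - N') / (a + t)\<bar> \<le> e / (a + t)"
      using assms(6) pos by (simp add: divide_right_mono)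
    also have "\<dots> \<le> e / t"
      using assms abs_ge_zero[of "N - N'"] by (intro divide_left_mono) auto
    finally show ?thesis .
  qed
  have denominator: "\<bar>N' * (a' - a) / ((a + t) * (a' + t))\<bar> \<le> M * e' / t\<^sup>2"
  proof -
    have "\<bar>N' * (a' - a) / ((a + t) * (a' + t))\<bar> = N' * \<bar>a - a'\<bar> / ((a + t) * (a' + t))"
      using pos assms(4) by (simp add: abs_mult abs_minus_commute)
    also have "\<dots> \<le> M * e' / ((a + t) * (a' + t))"
      using pos assms by (intro divide_right_mono mult_mono) auto
    also have "\<dots> \<le> M * e' / (t * t)"
      using assms abs_ge_zero[of "a - a'"] by (intro divide_left_mono mult_mono) auto
    finally show ?thesis by (simp add: power2_eq_square)
  qed
  show ?thesis
    unfolding split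
    using numerator denominator abs_triangle_ineq[of "(N - N') / (a + t)" "N' * (a' - a) / ((a + t) * (a' + t))"]
    by linarith
qed

lemma abs_norm_add_scaleR_diff_le:
  fixes x x' y y' :: "'a::real_normed_vector"
  shows "\<bar>norm (x + t *\<^sub>R y) - norm (x' + t *\<^sub>R y')\<bar> \<le> norm (x - x') + \<bar>t\<bar> * norm (y - y')"
proof -
  have "\<bar>norm (x + t *\<^sub>R y) - norm (x' + t *\<^sub>R y')\<bar> \<le> norm ((x - x') + t *\<^sub>R (y - y'))"
    using norm_triangle_ineq3[of "x + t *\<^sub>R y" "x' + t *\<^sub>R y'"] by (simp add: algebra_simps)
  also have "\<dots> \<le> norm (x - x') + \<bar>t\<bar> * norm (y - y')"
    using norm_triangle_ineq[of "x - x'" "t *\<^sub>R (y - y')"] by simp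
  finally show ?thesis .
qed

lemma abs_blinfun_apply_diff_le:
  fixes f f' :: "'a::real_normed_vector \<Rightarrow>\<^sub>L real"
  shows "\<bar>f x - f' x'\<bar> \<le> norm f * norm (x - x') + norm (f - f') * norm x'"
proof -
  have "f x - f' x' = f (x - x') + (f - f') x'"
    by (simp add: blinfun.diff_right blinfun.diff_left)
  then show ?thesis
    using norm_blinfun[of f "x - x'"] norm_blinfun[of "f - f'" x'] by simp
qed

lemma quotient_perturbation_le:
  fixes eps \<delta> t :: real
    and x x' y y' :: "'a::real_normed_vector"
    and xs xs' :: "'a \<Rightarrow>\<^sub>L real"
  assumes "eps > 0" "t \<ge> eps" "\<delta> \<ge> 0"
    and "norm x \<le> 1" "norm x' \<le> 1" "norm y' \<le> 1" "norm xs \<le> 1"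
    and "norm (x - x') \<le> \<delta>" "norm (y - y') \<le> \<delta>" "norm (xs - xs') \<le> \<delta>"
  shows "\<bar>norm (x + t *\<^sub>R y) / (\<bar>xs x\<bar> + t) - norm (x' + t *\<^sub>R y') / (\<bar>xs' x'\<bar> + t)\<bar>
           \<le> \<delta> * (3 / eps + 2 / eps\<^sup>2 + 1)"
proof -
  have t: "t > 0" using assms by linarith
  have numerator: "\<bar>norm (x + t *\<^sub>R y) - norm (x' + t *\<^sub>R y')\<bar> \<le> \<delta> * (1 + t)"
  proof -
    have "t * norm (y - y') \<le> t * \<delta>" using t assms by (intro mult_left_mono) auto
    moreover have "\<bar>t\<bar> = t" using t by simp
    ultimately show ?thesis
      using abs_norm_add_scaleR_diff_le[of x t y x' y'] assms
      by (simp only: distrib_left mult_1_right mult.commute[of \<delta> t])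
  qed
  have bounded: "norm (x' + t *\<^sub>R y') \<le> 1 + t"
  proof -
    have "t * norm y' \<le> t" using t assms mult_left_mono[of "norm y'" 1 t] by simp
    moreover have "norm (x' + t *\<^sub>R y') \<le> norm x' + t * norm y'"
      using norm_triangle_ineq[of x' "t *\<^sub>R y'"] t by simp
    ultimately show ?thesis using assms by linarith
  qed
  have denominator: "\<bar>\<bar>xs x\<bar> - \<bar>xs' x'\<bar>\<bar> \<le> 2 * \<delta>"
  proof -
    have "norm xs * norm (x - x') \<le> \<delta>" "norm (xs - xs') * norm x' \<le> \<delta>"
      using assms mult_mono[of "norm xs" 1 "norm (x - x')" \<delta>]
        mult_mono[of "norm (xs - xs')" \<delta> "norm x'" 1] by auto
    then show ?thesis
      using abs_blinfun_apply_diff_le[of xs x xs' x'] abs_triangle_ineq3[of "xs x" "xs' x'"]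
      by linarith
  qed
  have "\<bar>norm (x + t *\<^sub>R y) / (\<bar>xs x\<bar> + t) - norm (x' + t *\<^sub>R y') / (\<bar>xs' x'\<bar> + t)\<bar>
          \<le> \<delta> * (1 + t) / t + (1 + t) * (2 * \<delta>) / t\<^sup>2"
    using abs_diff_divide_add_le[OF t _ _ _ bounded numerator denominator] by simp
  also have "\<dots> = \<delta> * (3 / t + 2 / t\<^sup>2 + 1)"
    using t by (simp add: field_simps power2_eq_square)
  also have "\<dots> \<le> \<delta> * (3 / eps + 2 / eps\<^sup>2 + 1)"
  proof -
    have "3 / t \<le> 3 / eps" "2 / t\<^sup>2 \<le> 2 / eps\<^sup>2"
      using assms by (auto intro!: divide_left_mono power_mono)
    then show ?thesis using assms by (intro mult_left_mono) auto
  qed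
  finally show ?thesis .
qed

lemma bdd_above_fdef_terms:
  fixes eps :: real and x y :: "'a::real_normed_vector" and xs :: "'a \<Rightarrow>\<^sub>L real"
  assumes "eps > 0"
  shows "bdd_above ((\<lambda>t. 1 - norm (x + t *\<^sub>R y) / (\<bar>xs x\<bar> + t)) ` {eps..})"
proof (rule bdd_aboveI2[where M = 1])
  fix t :: real assume "t \<in> {eps..}"
  then have "\<bar>xs x\<bar> + t > 0" using assms by auto
  then show "1 - norm (x + t *\<^sub>R y) / (\<bar>xs x\<bar> + t) \<le> 1" by simp
qed

theorem lemma2p1:
  fixes eps \<delta> :: real
    and x x' y y' :: "'a::banach"
    and xs xs' :: "'a \<Rightarrow>\<^sub>L real"
  assumes "eps > 0" and "\<delta> > 0"
    and "norm x \<le> 1" "norm x' \<le> 1" "norm y \<le> 1" "norm y' \<le> 1"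
    and "norm xs \<le> 1" "norm xs' \<le> 1"
    and "norm (x - x') \<le> \<delta>" "norm (y - y') \<le> \<delta>" "norm (xs - xs') \<le> \<delta>"
  shows "\<bar>fdef eps x y xs - fdef eps x' y' xs'\<bar> \<le> \<delta> * (3 / eps + 2 / eps\<^sup>2 + 1)"
  unfolding fdef_def
proof (rule cSUP_abs_diff_le)
  show "{eps..} \<noteq> {}" by simp
  show "bdd_above ((\<lambda>t. 1 - norm (x + t *\<^sub>R y) / (\<bar>xs x\<bar> + t)) ` {eps..})"
    "bdd_above ((\<lambda>t. 1 - norm (x' + t *\<^sub>R y') / (\<bar>xs' x'\<bar> + t)) ` {eps..})"
    by (rule bdd_above_fdef_terms[OF assms(1)])+
next
  fix t assume "t \<in> {eps..}"
  then show "\<bar>(1 - norm (x + t *\<^sub>R y) / (\<bar>xs x\<bar> + t)) - (1 - norm (x' + t *\<^sub>R y') / (\<bar>xs' x'\<bar> + t))\<bar>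
               \<le> \<delta> * (3 / eps + 2 / eps\<^sup>2 + 1)"
    using quotient_perturbation_le[of eps t \<delta> x x' y' xs y xs'] assms by (simp add: abs_minus_commute)
qed

end
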